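(* Let $d \ge 1$, and for $i \in \{1,2\}$ let $G_i$ be a finite graph with a port numbering $\pi^i$ and a distinguished node $u_i$. Let $\Gamma_i = V(N_d(u_i)) \setminus \{u_i\}$ and let $\mathcal{F}_i$ be any family of subsets of $\Gamma_i$ that contains every singleton $\{v\}$, $v \in \Gamma_i$. If the $d$-hop neighborhoods $N_d(u_1)$ and $N_d(u_2)$ are not isomorphic as rooted graphs (rooted at $u_1$, $u_2$), then $$\{\, \tau_d^{G_1}(u_1; S) : S \in \mathcal{F}_1 \,\} \;\neq\; \{\, \tau_d^{G_2}(u_2; S) : S \in \mathcal{F}_2 \,\}.$$
   Context: A port numbering of a graph $G$ assigns to every node $v$ a bijection $\pi_v$ from the set of neighbors of $v$ to $\{1, \dots, \deg_G(v)\}$. Given $S \subseteq V(G)$ (the set of dropped nodes in a run) and a node $v \notin S$, the depth-$k$ port view $\tau_k^G(v;S)$ is defined recursively: $\tau_0^G(v;S) = \deg_G(v)$, and for $k \ge 1$, $\tau_k^G(v;S) = \big(\deg_G(v), (m_1, \dots, m_{\deg_G(v)})\big)$ where, if $w$ is the neighbor with $\pi_v(w) = j$, then $m_j = \bot$ if $w \in S$ (a dropped node sends no message), and $m_j = \big(\pi_w(v), \tau_{k-1}^G(w;S)\big)$ otherwise. This is the information a node $v$ gathers in $k$ rounds of message passing with port numbers in a run of a dropout GNN in which exactly the nodes of $S$ are dropped. The $d$-hop neighborhood $N_d(u)$ is the graph on all nodes at distance at most $d$ from $u$, containing all edges of $G$ among these nodes except those whose both endpoints are at distance exactly $d$ from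 $u$. The hypothesis that $\mathcal{F}_i$ contains all singletons expresses that every $1$-dropout of the neighborhood of $u_i$ is observed in at least one run (the "$1$-complete" setting); other dropout sets may be observed as well. *)

theory Defs
  imports Main
begin

definition finite_graph :: "'a set \<Rightarrow> ('a \<Rightarrow> 'a \<Rightarrow> bool) \<Rightarrow> bool" where
  "finite_graph V E \<longleftrightarrow> finite V \<and> (\<forall>v w. E v w \<longrightarrow> v \<in> V \<and> w \<in> V)
     \<and> (\<forall>v w. E v w \<longrightarrow> E w v) \<and> (\<forall>v. \<not> E v v)"

definition nbrs :: "('a \<Rightarrow> 'a \<Rightarrow> bool) \<Rightarrow> 'a \<Rightarrow> 'a set" where
  "nbrs E v = {w. E v w}"

definition deg :: "('a \<Rightarrow> 'a \<Rightarrow> bool) \<Rightarrow> 'a \<Rightarrow> nat" where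
  "deg E v = card (nbrs E v)"

definition port_numbering :: "'a set \<Rightarrow> ('a \<Rightarrow> 'a \<Rightarrow> bool) \<Rightarrow> ('a \<Rightarrow> 'a \<Rightarrow> nat) \<Rightarrow> bool" where
  "port_numbering V E \<pi> \<longleftrightarrow> (\<forall>v\<in>V. bij_betw (\<pi> v) (nbrs E v) {1..deg E v})"

definition port_nbr :: "('a \<Rightarrow> 'a \<Rightarrow> bool) \<Rightarrow> ('a \<Rightarrow> 'a \<Rightarrow> nat) \<Rightarrow> 'a \<Rightarrow> nat \<Rightarrow> 'a" where
  "port_nbr E \<pi> v j = (THE w. E v w \<and> \<pi> v w = j)"

text \<open>Port views: depth 0 is just a degree; depth k+1 is a degree together with the list
of messages m_1..m_deg, each either Bot (dropped neighbour) or (back-port, view).\<close>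

datatype pview = PLeaf nat | PNode nat "pmsg list"
     and pmsg = Bot | Msg nat pview

fun tau :: "('a \<Rightarrow> 'a \<Rightarrow> bool) \<Rightarrow> ('a \<Rightarrow> 'a \<Rightarrow> nat) \<Rightarrow> 'a set \<Rightarrow> nat \<Rightarrow> 'a \<Rightarrow> pview" where
  "tau E \<pi> S 0 v = PLeaf (deg E v)"
| "tau E \<pi> S (Suc k) v =
     PNode (deg E v)
       (map (\<lambda>j. let w = port_nbr E \<pi> v j in
                   if w \<in> S then Bot else Msg (\<pi> w v) (tau E \<pi> S k w))
            [1..<deg E v + 1])"

fun reach :: "('a \<Rightarrow> 'a \<Rightarrow> bool) \<Rightarrow> nat \<Rightarrow> 'a \<Rightarrow> 'a \<Rightarrow> bool" where
  "reach E 0 u v = (u = v)"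
| "reach E (Suc k) u v = (reach E k u v \<or> (\<exists>w. reach E k u w \<and> E w v))"

definition hop_nodes :: "('a \<Rightarrow> 'a \<Rightarrow> bool) \<Rightarrow> 'a \<Rightarrow> nat \<Rightarrow> 'a set" where
  "hop_nodes E u d = {v. reach E d u v}"

definition at_dist :: "('a \<Rightarrow> 'a \<Rightarrow> bool) \<Rightarrow> 'a \<Rightarrow> nat \<Rightarrow> 'a \<Rightarrow> bool" where
  "at_dist E u d v \<longleftrightarrow> reach E d u v \<and> (d = 0 \<or> \<not> reach E (d - 1) u v)"

definition hop_edge :: "('a \<Rightarrow> 'a \<Rightarrow> bool) \<Rightarrow> 'a \<Rightarrow> nat \<Rightarrow> 'a \<Rightarrow> 'a \<Rightarrow> bool" where
  "hop_edge E u d v w \<longleftrightarrow> E v w \<and> v \<in> hop_nodes E u d \<and> w \<in> hop_nodes E u d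
     \<and> \<not> (at_dist E u d v \<and> at_dist E u d w)"

definition rooted_iso ::
  "'a set \<Rightarrow> ('a \<Rightarrow> 'a \<Rightarrow> bool) \<Rightarrow> 'a \<Rightarrow> 'b set \<Rightarrow> ('b \<Rightarrow> 'b \<Rightarrow> bool) \<Rightarrow> 'b \<Rightarrow> bool" where
  "rooted_iso V1 E1 r1 V2 E2 r2 \<longleftrightarrow>
     (\<exists>f. bij_betw f V1 V2 \<and> f r1 = r2 \<and> (\<forall>v\<in>V1. \<forall>w\<in>V1. E1 v w \<longleftrightarrow> E2 (f v) (f w)))"

end

theory Submission
  imports Defs
begin

text \<open>Read port views along sequences of port numbers from the root. In the run that drops
  exactly one node w, a port path shows \<open>\<bottom>\<close> at its last step iff it ends at w without passing
  through w earlier. Hence the set of views observed over all runs tells, for two port paths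
  of length at most d, whether they end at different nodes: some run shows \<open>\<bottom>\<close> at the end of one
  and a message at the end of the other. This identifies the shortest port paths to the nodes
  of N_d(u), which are thus in bijection with those nodes, and an edge of N_d(u) shows up as a
  one-step extension of the shorter path that cannot be told apart from the longer one. So the
  set of views determines N_d(u) up to rooted isomorphism.\<close>

fun port_walk :: "('a \<Rightarrow> 'a \<Rightarrow> bool) \<Rightarrow> ('a \<Rightarrow> 'a \<Rightarrow> nat) \<Rightarrow> 'a \<Rightarrow> nat list \<Rightarrow> bool" where
  "port_walk E \<pi> x [] = True"
| "port_walk E \<pi> x (j # js) = (1 \<le> j \<and> j \<le> deg E x \<and> port_walk E \<pi> (port_nbr E \<pi> x j) js)"

fun walk_end :: "('a \<Rightarrow> 'a \<Rightarrow> bool) \<Rightarrow> ('a \<Rightarrow> 'a \<Rightarrow> nat) \<Rightarrow> 'a \<Rightarrow> nat list \<Rightarrow> 'a" where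
  "walk_end E \<pi> x [] = x"
| "walk_end E \<pi> x (j # js) = walk_end E \<pi> (port_nbr E \<pi> x j) js"

lemma port_walk_snoc:
  "port_walk E \<pi> x (p @ [j]) \<longleftrightarrow> port_walk E \<pi> x p \<and> 1 \<le> j \<and> j \<le> deg E (walk_end E \<pi> x p)"
  by (induction p arbitrary: x) auto

lemma walk_end_snoc: "walk_end E \<pi> x (p @ [j]) = port_nbr E \<pi> (walk_end E \<pi> x p) j"
  by (induction p arbitrary: x) auto

lemma port_walk_take: "port_walk E \<pi> x p \<Longrightarrow> port_walk E \<pi> x (take i p)"
  by (induction p arbitrary: x i) (auto simp: take_Cons split: nat.splits)

datatype port_status = Absent | Dropped | Present

fun view_at :: "pview \<Rightarrow> nat list \<Rightarrow> port_status" where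
  "view_at T [] = Present"
| "view_at (PLeaf n) (j # js) = Absent"
| "view_at (PNode n ms) (j # js) =
     (if 1 \<le> j \<and> j \<le> length ms then
        (case ms ! (j - 1) of
           Bot \<Rightarrow> if js = [] then Dropped else Absent
         | Msg b T \<Rightarrow> view_at T js)
      else Absent)"

lemma interior_avoids_Cons:
  "(\<forall>i. 0 < i \<and> i < Suc (length js) \<longrightarrow> walk_end E \<pi> x (take i (j # js)) \<notin> S) \<longleftrightarrow>
     (js \<noteq> [] \<longrightarrow> port_nbr E \<pi> x j \<notin> S) \<and>
     (\<forall>i. 0 < i \<and> i < length js \<longrightarrow> walk_end E \<pi> (port_nbr E \<pi> x j) (take i js) \<notin> S)"
  (is "?lhs \<longleftrightarrow> ?rhs")
proof
  assume ?lhs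
  then show ?rhs
    by (auto dest: spec[of _ 1] spec[of _ "Suc i" for i])
next
  assume rhs: ?rhs
  show ?lhs
  proof (intro allI impI)
    fix i assume "0 < i \<and> i < Suc (length js)"
    then obtain m where "i = Suc m" "m < length js" by (cases i) auto
    then show "walk_end E \<pi> x (take i (j # js)) \<notin> S"
      using rhs by (cases "m = 0") auto
  qed
qed

lemma view_at_tau:
  "view_at (tau E \<pi> S k x) p =
     (if port_walk E \<pi> x p \<and> length p \<le> k \<and>
         (\<forall>i. 0 < i \<and> i < length p \<longrightarrow> walk_end E \<pi> x (take i p) \<notin> S)
      then (if p \<noteq> [] \<and> walk_end E \<pi> x p \<in> S then Dropped else Present)
      else Absent)"
proof (induction p arbitrary: k x)
  case Nil
  then show ?case by (cases k) auto
next
  case (Cons j js)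
  have nth_ports: "map f [1..<n + 1] ! (j - 1) = f j" if "1 \<le> j" "j \<le> n" for f :: "nat \<Rightarrow> pmsg" and n
    using that by (subst nth_map) (auto simp del: upt_Suc)
  show ?case
    by (cases k) (auto simp: Let_def nth_ports interior_avoids_Cons Cons.IH simp del: upt_Suc)
qed

lemma view_at_tau_Dropped_iff:
  "view_at (tau E \<pi> S k x) p = Dropped \<longleftrightarrow>
     view_at (tau E \<pi> S k x) p \<noteq> Absent \<and> p \<noteq> [] \<and> walk_end E \<pi> x p \<in> S"
  unfolding view_at_tau by simp

text \<open>The empty path stands for the root; it is included so that the root is represented even
  when no run is observed.\<close>

definition shown_paths :: "pview set \<Rightarrow> nat list set" where
  "shown_paths Vs = insert [] {p. \<exists>T\<in>Vs. view_at T p \<noteq> Absent}"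

text \<open>Separated port paths end at different nodes: some run drops the end of one but not of the
  other.\<close>

definition separated :: "pview set \<Rightarrow> nat list \<Rightarrow> nat list \<Rightarrow> bool" where
  "separated Vs p q \<longleftrightarrow> (\<exists>T\<in>Vs.
     view_at T p = Dropped \<and> view_at T q = Present \<or> view_at T q = Dropped \<and> view_at T p = Present)"

definition view_geodesic :: "pview set \<Rightarrow> nat list \<Rightarrow> bool" where
  "view_geodesic Vs p \<longleftrightarrow>
     p \<in> shown_paths Vs \<and> (\<forall>q\<in>shown_paths Vs. length q < length p \<longrightarrow> separated Vs p q)"

definition view_adjacent :: "pview set \<Rightarrow> nat list \<Rightarrow> nat list \<Rightarrow> bool" where
  "view_adjacent Vs p q \<longleftrightarrow> separated Vs p q \<and> length p \<le> length q \<and>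
     (\<exists>j. p @ [j] \<in> shown_paths Vs \<and> \<not> separated Vs (p @ [j]) q)"

lemma separated_sym: "separated Vs p q \<longleftrightarrow> separated Vs q p"
  unfolding separated_def by blast

locale port_graph =
  fixes V :: "'a set" and E :: "'a \<Rightarrow> 'a \<Rightarrow> bool" and \<pi> :: "'a \<Rightarrow> 'a \<Rightarrow> nat"
  assumes graph: "finite_graph V E" and ports: "port_numbering V E \<pi>"
begin

lemma edge_sym: "E v w \<Longrightarrow> E w v"
  using graph unfolding finite_graph_def by blast

lemma edge_irrefl: "\<not> E v v"
  using graph unfolding finite_graph_def by blast

lemma port_bij: "E x w \<Longrightarrow> bij_betw (\<pi> x) (nbrs E x) {1..deg E x}"
  using graph ports unfolding finite_graph_def port_numbering_def by blast

lemma port_nbr_port: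
  assumes "E x w"
  shows "1 \<le> \<pi> x w" "\<pi> x w \<le> deg E x" "port_nbr E \<pi> x (\<pi> x w) = w"
proof -
  have bij: "bij_betw (\<pi> x) (nbrs E x) {1..deg E x}" and w: "w \<in> nbrs E x"
    using port_bij assms by (auto simp: nbrs_def)
  then show "1 \<le> \<pi> x w" "\<pi> x w \<le> deg E x"
    using bij_betwE by fastforce+
  have "\<exists>!w'. E x w' \<and> \<pi> x w' = \<pi> x w"
    using bij w assms unfolding bij_betw_def inj_on_def nbrs_def by blast
  then show "port_nbr E \<pi> x (\<pi> x w) = w"
    unfolding port_nbr_def using assms by (blast intro: the1_equality)
qed

lemma edge_port_nbr:
  assumes "1 \<le> j" "j \<le> deg E x"
  shows "E x (port_nbr E \<pi> x j)"
proof -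
  have "nbrs E x \<noteq> {}"
    using assms unfolding deg_def by auto
  then obtain w0 where "E x w0"
    unfolding nbrs_def by blast
  then have "j \<in> \<pi> x ` nbrs E x"
    using port_bij assms by (simp add: bij_betw_def)
  then obtain w where "E x w" "\<pi> x w = j"
    by (auto simp: nbrs_def)
  then show ?thesis
    using port_nbr_port by metis
qed

lemma reach_iff_port_walk:
  "reach E k u v \<longleftrightarrow> (\<exists>p. port_walk E \<pi> u p \<and> length p \<le> k \<and> walk_end E \<pi> u p = v)"
proof (induction k arbitrary: v)
  case 0
  show ?case by auto
next
  case (Suc k)
  show ?case
  proof
    assume "reach E (Suc k) u v"
    then consider "reach E k u v" | w where "reach E k u w" "E w v"
      by auto
    then show "\<exists>p. port_walk E \<pi> u p \<and> length p \<le> Suc k \<and> walk_end E \<pi> u p = v"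
    proof cases
      case 1
      then show ?thesis using Suc.IH le_SucI by blast
    next
      case 2
      then obtain p where "port_walk E \<pi> u p" "length p \<le> k" "walk_end E \<pi> u p = w"
        using Suc.IH by blast
      then show ?thesis
        using port_nbr_port[OF \<open>E w v\<close>]
        by (intro exI[of _ "p @ [\<pi> w v]"]) (simp add: port_walk_snoc walk_end_snoc)
    qed
  next
    assume "\<exists>p. port_walk E \<pi> u p \<and> length p \<le> Suc k \<and> walk_end E \<pi> u p = v"
    then obtain p where p: "port_walk E \<pi> u p" "length p \<le> Suc k" "walk_end E \<pi> u p = v"
      by blast
    show "reach E (Suc k) u v"
    proof (cases "length p \<le> k")
      case True
      then show ?thesis using Suc.IH p by auto
    next
      case False
      then obtain q j where q: "p = q @ [j]" "length q \<le> k"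
        using p(2) by (cases p rule: rev_cases) auto
      then have "reach E k u (walk_end E \<pi> u q)" "E (walk_end E \<pi> u q) v"
        using Suc.IH p edge_port_nbr by (auto simp: port_walk_snoc walk_end_snoc)
      then show ?thesis by auto
    qed
  qed
qed

definition shortest_walk :: "'a \<Rightarrow> nat list \<Rightarrow> bool" where
  "shortest_walk x p \<longleftrightarrow> port_walk E \<pi> x p \<and>
     (\<forall>q. port_walk E \<pi> x q \<and> walk_end E \<pi> x q = walk_end E \<pi> x p \<longrightarrow> length p \<le> length q)"

lemma shortest_walk_Nil: "shortest_walk x []"
  by (simp add: shortest_walk_def)

lemma shortest_walk_exists:
  assumes "port_walk E \<pi> x p"
  obtains q where "shortest_walk x q" "walk_end E \<pi> x q = walk_end E \<pi> x p" "length q \<le> length p"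
proof -
  define P where "P n \<longleftrightarrow> (\<exists>q. port_walk E \<pi> x q \<and> walk_end E \<pi> x q = walk_end E \<pi> x p \<and> length q = n)"
    for n
  define n where "n = (LEAST n. P n)"
  have "P n"
    unfolding n_def using assms by (intro LeastI[of P "length p"]) (auto simp: P_def)
  then obtain q where q: "port_walk E \<pi> x q" "walk_end E \<pi> x q = walk_end E \<pi> x p" "length q = n"
    unfolding P_def by blast
  then have "shortest_walk x q"
    unfolding shortest_walk_def n_def using q by (auto intro!: Least_le simp: P_def)
  moreover have "length q \<le> length p"
    unfolding q(3) n_def using assms by (auto intro!: Least_le simp: P_def)
  ultimately show ?thesis using that q(2) by blast
qed

lemma shortest_walk_prefix_end:
  assumes "shortest_walk x q" "port_walk E \<pi> x p" "i \<le> length p"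
    and "walk_end E \<pi> x (take i p) = walk_end E \<pi> x q"
  shows "length q \<le> i"
  using assms port_walk_take[OF assms(2), of i] unfolding shortest_walk_def by fastforce

end

locale dropout_views = port_graph +
  fixes u :: 'a and d :: nat and F :: "'a set set"
  assumes d_pos: "1 \<le> d"
    and root_kept: "\<forall>S\<in>F. u \<notin> S"
    and singletons_observed: "\<forall>v\<in>hop_nodes E u d - {u}. {v} \<in> F"
begin

abbreviation views :: "pview set" where
  "views \<equiv> (\<lambda>S. tau E \<pi> S d u) ` F"

abbreviation walk :: "nat list \<Rightarrow> bool" where
  "walk \<equiv> port_walk E \<pi> u"

abbreviation endpoint :: "nat list \<Rightarrow> 'a" where
  "endpoint \<equiv> walk_end E \<pi> u"

abbreviation geodesic :: "nat list \<Rightarrow> bool" where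
  "geodesic \<equiv> shortest_walk u"

lemma hop_nodes_iff_walk: "v \<in> hop_nodes E u d \<longleftrightarrow> (\<exists>p. walk p \<and> length p \<le> d \<and> endpoint p = v)"
  by (simp add: hop_nodes_def reach_iff_port_walk)

lemma walk_end_in_hop_nodes: "walk p \<Longrightarrow> length p \<le> d \<Longrightarrow> endpoint p \<in> hop_nodes E u d"
  using hop_nodes_iff_walk by blast

lemma shown_path_walk: "p \<in> shown_paths views \<Longrightarrow> walk p \<and> length p \<le> d"
  by (auto simp: shown_paths_def view_at_tau split: if_splits)

lemma same_endpoint_not_separated:
  assumes "endpoint p = endpoint q"
  shows "\<not> separated views p q"
proof -
  have "\<not> (view_at T p' = Dropped \<and> view_at T q' = Present)"
    if "T \<in> views" "endpoint p' = endpoint q'" for T p' q'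
  proof
    obtain S where S: "S \<in> F" "T = tau E \<pi> S d u"
      using \<open>T \<in> views\<close> by blast
    assume "view_at T p' = Dropped \<and> view_at T q' = Present"
    then have "endpoint q' \<in> S" "q' = []"
      using S(2) that(2) view_at_tau_Dropped_iff by (metis port_status.distinct)+
    then show False
      using root_kept S(1) by auto
  qed
  then show ?thesis
    using assms unfolding separated_def by metis
qed

lemma geodesic_end_observed:
  assumes "geodesic q" "q \<noteq> []" "length q \<le> d"
  shows "{endpoint q} \<in> F"
proof -
  have "endpoint q \<in> hop_nodes E u d"
    using assms walk_end_in_hop_nodes unfolding shortest_walk_def by blast
  moreover have "endpoint q \<noteq> u"
    using assms(1,2) shortest_walk_Nil unfolding shortest_walk_def
    by (metis le_zero_eq length_0_conv port_walk.simps(1) walk_end.simps(1))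
  ultimately show ?thesis
    using singletons_observed by blast
qed

lemma geodesic_prefix_end_ne:
  assumes "geodesic q" "walk p" "length p \<le> length q" "endpoint p \<noteq> endpoint q" "i \<le> length p"
  shows "endpoint (take i p) \<noteq> endpoint q"
proof
  assume "endpoint (take i p) = endpoint q"
  moreover from this have "i = length p"
    using shortest_walk_prefix_end[OF assms(1,2,5)] assms(3,5) by simp
  ultimately show False
    using assms(4) by simp
qed

lemma geodesic_view_Dropped:
  assumes "geodesic q" "q \<noteq> []" "length q \<le> d"
  shows "view_at (tau E \<pi> {endpoint q} d u) q = Dropped"
proof -
  have "endpoint (take i q) \<noteq> endpoint q" if "i < length q" for i
    using shortest_walk_prefix_end[OF assms(1), of q i] assms(1) that
    unfolding shortest_walk_def by force
  then show ?thesis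
    using assms unfolding shortest_walk_def view_at_tau by simp
qed

lemma geodesic_shown:
  assumes "geodesic p" "length p \<le> d"
  shows "p \<in> shown_paths views"
proof (cases "p = []")
  case False
  then show ?thesis
    using geodesic_view_Dropped[OF assms(1) False assms(2)] geodesic_end_observed[OF assms(1) False assms(2)]
    unfolding shown_paths_def by force
qed (simp add: shown_paths_def)

text \<open>The separating run is the one that drops only the endpoint of q.\<close>

lemma separated_if_avoids:
  assumes "geodesic q" "q \<noteq> []" "length q \<le> d" "walk p" "length p \<le> d"
    and "\<forall>i\<le>length p. endpoint (take i p) \<noteq> endpoint q"
  shows "separated views p q"
proof -
  have "endpoint p \<noteq> endpoint q"
    using assms(6) by (metis order_refl take_all)
  then have "view_at (tau E \<pi> {endpoint q} d u) p = Present"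
    using assms(4-6) unfolding view_at_tau by simp
  moreover have "tau E \<pi> {endpoint q} d u \<in> views"
    using geodesic_end_observed[OF assms(1-3)] by (rule imageI)
  ultimately show ?thesis
    unfolding separated_def using geodesic_view_Dropped[OF assms(1-3)] by blast
qed

lemma geodesic_separated:
  assumes "geodesic q" "length q \<le> d" "walk p" "length p \<le> length q" "endpoint p \<noteq> endpoint q"
  shows "separated views p q"
proof -
  have "q \<noteq> []"
    using assms(4,5) by auto
  moreover have "\<forall>i\<le>length p. endpoint (take i p) \<noteq> endpoint q"
    using geodesic_prefix_end_ne[OF assms(1,3-5)] by blast
  moreover have "length p \<le> d"
    using assms(2,4) by linarith
  ultimately show ?thesis
    using separated_if_avoids[OF assms(1) _ assms(2,3)] by blast
qed

lemma view_geodesic_iff: "view_geodesic views p \<longleftrightarrow> geodesic p \<and> length p \<le> d"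
proof
  assume p: "view_geodesic views p"
  then have "walk p" and "length p \<le> d"
    using shown_path_walk unfolding view_geodesic_def by blast+
  moreover have "length p \<le> length q" if q: "walk q" "endpoint q = endpoint p" for q
  proof (rule ccontr)
    assume shorter: "\<not> length p \<le> length q"
    obtain q' where q': "geodesic q'" "endpoint q' = endpoint p" "length q' \<le> length q"
      using shortest_walk_exists[OF q(1)] q(2) by metis
    with shorter \<open>length p \<le> d\<close> have "q' \<in> shown_paths views"
      by (intro geodesic_shown) auto
    with p q' shorter have "separated views p q'"
      unfolding view_geodesic_def by auto
    with q'(2) show False
      using same_endpoint_not_separated by metis
  qed
  ultimately show "geodesic p \<and> length p \<le> d"
    unfolding shortest_walk_def by blast
next
  assume p: "geodesic p \<and> length p \<le> d"
  have "separated views p q" if "q \<in> shown_paths views" "length q < length p" for q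
  proof -
    have "walk q"
      using shown_path_walk that(1) by blast
    moreover have "endpoint q \<noteq> endpoint p"
      using p that(2) \<open>walk q\<close> unfolding shortest_walk_def by force
    ultimately show ?thesis
      using geodesic_separated[of p q] p that(2) separated_sym by auto
  qed
  then show "view_geodesic views p"
    using geodesic_shown p unfolding view_geodesic_def by blast
qed

lemma view_geodesic_Nil: "view_geodesic views []"
  using view_geodesic_iff shortest_walk_Nil by simp

lemma hop_nodes_eq_view_geodesic_ends:
  "hop_nodes E u d = endpoint ` {p. view_geodesic views p}"
proof
  show "hop_nodes E u d \<subseteq> endpoint ` {p. view_geodesic views p}"
  proof
    fix v
    assume "v \<in> hop_nodes E u d"
    then obtain p where p: "walk p" "length p \<le> d" "endpoint p = v"
      using hop_nodes_iff_walk by blast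
    then obtain q where "geodesic q" "endpoint q = v" "length q \<le> d"
      using shortest_walk_exists[OF p(1)] by (metis order.trans)
    then show "v \<in> endpoint ` {p. view_geodesic views p}"
      using view_geodesic_iff by blast
  qed
  show "endpoint ` {p. view_geodesic views p} \<subseteq> hop_nodes E u d"
    using view_geodesic_iff walk_end_in_hop_nodes unfolding shortest_walk_def by blast
qed

lemma endpoint_eq_iff_not_separated:
  assumes "view_geodesic views p" "view_geodesic views q"
  shows "endpoint p = endpoint q \<longleftrightarrow> \<not> separated views p q"
proof
  assume "\<not> separated views p q"
  then show "endpoint p = endpoint q"
    using assms geodesic_separated[of q p] geodesic_separated[of p q] separated_sym
    unfolding view_geodesic_iff shortest_walk_def by (metis nat_le_linear)
qed (rule same_endpoint_not_separated)

lemma geodesic_not_at_dist: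
  assumes "geodesic p" "length p < d"
  shows "\<not> at_dist E u d (endpoint p)"
proof -
  have "reach E (d - 1) u (endpoint p)"
    using assms reach_iff_port_walk unfolding shortest_walk_def by fastforce
  then show ?thesis
    unfolding at_dist_def using d_pos by simp
qed

lemma geodesic_at_dist:
  assumes "geodesic p" "length p = d"
  shows "at_dist E u d (endpoint p)"
proof -
  have "reach E d u (endpoint p)"
    using assms reach_iff_port_walk unfolding shortest_walk_def by fastforce
  moreover have "\<not> reach E (d - 1) u (endpoint p)"
  proof
    assume "reach E (d - 1) u (endpoint p)"
    then obtain r where "walk r" "length r \<le> d - 1" "endpoint r = endpoint p"
      using reach_iff_port_walk by blast
    then show False
      using assms d_pos unfolding shortest_walk_def by fastforce
  qed
  ultimately show ?thesis
    unfolding at_dist_def by simp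
qed

lemma hop_edge_sym: "hop_edge E u d v w \<Longrightarrow> hop_edge E u d w v"
  unfolding hop_edge_def using edge_sym by blast

lemma view_adjacent_hop_edge:
  assumes "geodesic p" "geodesic q" "length q \<le> d" "view_adjacent views p q"
  shows "hop_edge E u d (endpoint p) (endpoint q)"
proof -
  obtain j where shown: "p @ [j] \<in> shown_paths views" and close: "\<not> separated views (p @ [j]) q"
    using assms(4) unfolding view_adjacent_def by blast
  have le: "length p \<le> length q" and ne: "endpoint p \<noteq> endpoint q"
    using assms(4) same_endpoint_not_separated unfolding view_adjacent_def by auto
  then have "q \<noteq> []"
    by auto
  have walk_pj: "walk (p @ [j])" and "length p < d"
    using shown_path_walk[OF shown] by auto
  then have edge: "E (endpoint p) (endpoint (p @ [j]))"
    using edge_port_nbr by (simp add: port_walk_snoc walk_end_snoc)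
  have "endpoint (p @ [j]) = endpoint q"
  proof (rule ccontr)
    assume "endpoint (p @ [j]) \<noteq> endpoint q"
    moreover have "endpoint (take i p) \<noteq> endpoint q" if "i \<le> length p" for i
      using geodesic_prefix_end_ne[OF assms(2) _ le ne that] assms(1)
      unfolding shortest_walk_def by blast
    ultimately have "\<forall>i\<le>length (p @ [j]). endpoint (take i (p @ [j])) \<noteq> endpoint q"
      by (auto simp: le_Suc_eq)
    then have "separated views (p @ [j]) q"
      using separated_if_avoids[OF assms(2) \<open>q \<noteq> []\<close> assms(3) walk_pj] shown_path_walk[OF shown]
      by blast
    with close show False ..
  qed
  moreover have "endpoint p \<in> hop_nodes E u d" "endpoint q \<in> hop_nodes E u d"
    using assms(1-3) \<open>length p < d\<close> walk_end_in_hop_nodes unfolding shortest_walk_def by auto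
  ultimately show ?thesis
    using edge geodesic_not_at_dist[OF assms(1) \<open>length p < d\<close>] unfolding hop_edge_def by simp
qed

lemma hop_edge_view_adjacent:
  assumes "geodesic p" "geodesic q" "length p \<le> length q" "length q \<le> d"
    and "hop_edge E u d (endpoint p) (endpoint q)"
  shows "view_adjacent views p q"
proof -
  have edge: "E (endpoint p) (endpoint q)"
    using assms(5) by (simp add: hop_edge_def)
  then have ne: "endpoint p \<noteq> endpoint q"
    using edge_irrefl by metis
  have "length p < d"
  proof (rule ccontr)
    assume "\<not> length p < d"
    then have "at_dist E u d (endpoint p)" "at_dist E u d (endpoint q)"
      using assms(1-4) geodesic_at_dist by auto
    then show False
      using assms(5) by (simp add: hop_edge_def)
  qed
  define j where "j = \<pi> (endpoint p) (endpoint q)"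
  have walk_pj: "walk (p @ [j])" and end_pj: "endpoint (p @ [j]) = endpoint q"
    using port_nbr_port[OF edge] assms(1)
    unfolding j_def shortest_walk_def by (auto simp: port_walk_snoc walk_end_snoc)
  have "q \<noteq> []"
    using assms(3) ne by auto
  have "endpoint (take i p) \<noteq> endpoint q" if "i \<le> length p" for i
    using geodesic_prefix_end_ne[OF assms(2) _ assms(3) ne that] assms(1)
    unfolding shortest_walk_def by blast
  then have "view_at (tau E \<pi> {endpoint q} d u) (p @ [j]) = Dropped"
    using walk_pj end_pj \<open>length p < d\<close> unfolding view_at_tau by simp
  then have "p @ [j] \<in> shown_paths views"
    using geodesic_end_observed[OF assms(2) \<open>q \<noteq> []\<close> assms(4)] unfolding shown_paths_def by force
  moreover have "separated views p q"
    using geodesic_separated[OF assms(2,4) _ assms(3) ne] assms(1) unfolding shortest_walk_def by blast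
  ultimately show ?thesis
    unfolding view_adjacent_def using assms(3) end_pj same_endpoint_not_separated by blast
qed

lemma hop_edge_iff_view_adjacent:
  assumes "view_geodesic views p" "view_geodesic views q"
  shows "hop_edge E u d (endpoint p) (endpoint q) \<longleftrightarrow>
    view_adjacent views p q \<or> view_adjacent views q p"
  using assms hop_edge_view_adjacent view_adjacent_hop_edge hop_edge_sym
  unfolding view_geodesic_iff by (metis nat_le_linear)

end

lemma rooted_iso_by_common_labelling:
  assumes "V1 = f1 ` P" "V2 = f2 ` P" "x \<in> P" "f1 x = r1" "f2 x = r2"
    and "\<forall>p\<in>P. \<forall>q\<in>P. f1 p = f1 q \<longleftrightarrow> f2 p = f2 q"
    and "\<forall>p\<in>P. \<forall>q\<in>P. E1 (f1 p) (f1 q) \<longleftrightarrow> E2 (f2 p) (f2 q)"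
  shows "rooted_iso V1 E1 r1 V2 E2 r2"
proof -
  define g where "g = f2 \<circ> inv_into P f1"
  have g: "g (f1 p) = f2 p" if "p \<in> P" for p
  proof -
    have "inv_into P f1 (f1 p) \<in> P" "f1 (inv_into P f1 (f1 p)) = f1 p"
      using that by (auto intro: inv_into_into f_inv_into_f)
    then show ?thesis
      using assms(6) that unfolding g_def by auto
  qed
  have "inj_on g V1"
    using assms(1,6) g by (auto intro!: inj_onI)
  moreover have "g ` V1 = V2"
    using assms(1,2) g by (auto simp: image_comp cong: image_cong)
  moreover have "\<forall>v\<in>V1. \<forall>w\<in>V1. E1 v w \<longleftrightarrow> E2 (g v) (g w)"
    using assms(1,7) g by auto
  ultimately show ?thesis
    unfolding rooted_iso_def bij_betw_def using g assms(3-5) by metis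
qed

theorem theorem4:
  fixes V1 :: "'a set" and E1 :: "'a \<Rightarrow> 'a \<Rightarrow> bool" and \<pi>1 :: "'a \<Rightarrow> 'a \<Rightarrow> nat"
    and V2 :: "'b set" and E2 :: "'b \<Rightarrow> 'b \<Rightarrow> bool" and \<pi>2 :: "'b \<Rightarrow> 'b \<Rightarrow> nat"
    and u1 :: 'a and u2 :: 'b and d :: nat
    and F1 :: "'a set set" and F2 :: "'b set set"
  assumes "d \<ge> 1"
    and "finite_graph V1 E1" and "port_numbering V1 E1 \<pi>1" and "u1 \<in> V1"
    and "finite_graph V2 E2" and "port_numbering V2 E2 \<pi>2" and "u2 \<in> V2"
    and "\<forall>S\<in>F1. S \<subseteq> hop_nodes E1 u1 d - {u1}"
    and "\<forall>v\<in>hop_nodes E1 u1 d - {u1}. {v} \<in> F1"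
    and "\<forall>S\<in>F2. S \<subseteq> hop_nodes E2 u2 d - {u2}"
    and "\<forall>v\<in>hop_nodes E2 u2 d - {u2}. {v} \<in> F2"
    and "\<not> rooted_iso (hop_nodes E1 u1 d) (hop_edge E1 u1 d) u1
                     (hop_nodes E2 u2 d) (hop_edge E2 u2 d) u2"
  shows "(\<lambda>S. tau E1 \<pi>1 S d u1) ` F1 \<noteq> (\<lambda>S. tau E2 \<pi>2 S d u2) ` F2"
proof
  interpret G1: dropout_views V1 E1 \<pi>1 u1 d F1
    using assms by unfold_locales auto
  interpret G2: dropout_views V2 E2 \<pi>2 u2 d F2
    using assms by unfold_locales auto
  assume views_eq: "(\<lambda>S. tau E1 \<pi>1 S d u1) ` F1 = (\<lambda>S. tau E2 \<pi>2 S d u2) ` F2"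
  let ?P = "{p. view_geodesic ((\<lambda>S. tau E1 \<pi>1 S d u1) ` F1) p}"
  have "rooted_iso (hop_nodes E1 u1 d) (hop_edge E1 u1 d) u1
                   (hop_nodes E2 u2 d) (hop_edge E2 u2 d) u2"
  proof (rule rooted_iso_by_common_labelling[where P = ?P and x = "[]"])
    show "hop_nodes E1 u1 d = G1.endpoint ` ?P" "hop_nodes E2 u2 d = G2.endpoint ` ?P"
      using G1.hop_nodes_eq_view_geodesic_ends G2.hop_nodes_eq_view_geodesic_ends views_eq by simp_all
    show "[] \<in> ?P"
      using G1.view_geodesic_Nil by simp
    show "\<forall>p\<in>?P. \<forall>q\<in>?P. G1.endpoint p = G1.endpoint q \<longleftrightarrow> G2.endpoint p = G2.endpoint q"
      using G1.endpoint_eq_iff_not_separated G2.endpoint_eq_iff_not_separated views_eq by simp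
    show "\<forall>p\<in>?P. \<forall>q\<in>?P. hop_edge E1 u1 d (G1.endpoint p) (G1.endpoint q) \<longleftrightarrow>
                          hop_edge E2 u2 d (G2.endpoint p) (G2.endpoint q)"
      using G1.hop_edge_iff_view_adjacent G2.hop_edge_iff_view_adjacent views_eq by simp
  qed simp_all
  with assms(12) show False ..
qed

end
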